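(* Let $P:[-1,\infty)\to\mathbb{C}\cong\mathbb{R}^2$ be the log-aesthetic curve with shape parameter $\alpha=2$ and $\Lambda=1$ (a circle involute), $P(\theta)=\int_0^\theta(\psi+1)e^{i\psi}\,d\psi$, and let $\delta=\tfrac{2\pi}{3}$. Let $I_\delta$ be its isoptic curve for the angle $\gamma=\pi-\delta=\pi/3$, parametrized for $\theta\ge -1$ by $$I_\delta(\theta)=P(\theta)+\csc(\delta)\Big(V_x(\theta)\sin(\theta+\delta)-V_y(\theta)\cos(\theta+\delta)\Big)(\cos\theta,\sin\theta)^T,$$ where $(V_x(\theta),V_y(\theta))^T$ is the vector $P(\theta+\delta)-P(\theta)$ (i.e. $I_\delta(\theta)$ is the intersection of the tangent lines of $P$ at $P(\theta)$ and $P(\theta+\delta)$). Then the logarithmic curvature graph of $I_\delta$ is not a straight line (its slope is not constant); hence the isoptic is not a log-aesthetic curve, and in particular the circle involute is not autoisoptic. Moreover, the slope of the logarithmic curvature graph of $I_\delta$ (measured between the points with parameters $\theta$ and $\theta+\pi$) tends to $2$ as $\theta\to\infty$.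
   Context: For a regular plane curve with radius of curvature $\rho$ and arc length $s$, the logarithmic curvature graph (LCG) is the curve traced by the points $\big(\log\rho,\ \log(\rho\,|ds/d\rho|)\big)$ along the curve. A log-aesthetic curve with shape parameter $\alpha$ is a curve whose LCG is a straight line of slope $\alpha$, i.e. $\log(\rho\, ds/d\rho)=\alpha\log\rho+c$ for a constant $c$. A curve is called autoisoptic if it coincides (up to similarity) with its isoptic curve. The isoptic curve for angle $\gamma\in(0,\pi)$ is the locus of points from which the curve is seen under angle $\gamma$ (intersection points of pairs of tangent lines meeting at angle $\gamma$). *)

theory Defs
  imports "HOL-Analysis.Analysis"
begin

definition speed :: "(real \<Rightarrow> complex) \<Rightarrow> real \<Rightarrow> real" where
  "speed \<gamma> t = norm (vector_derivative \<gamma> (at t))"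

text \<open>Signed curvature (x'y'' - y'x'') / |gamma'|^3.\<close>
definition curvature :: "(real \<Rightarrow> complex) \<Rightarrow> real \<Rightarrow> real" where
  "curvature \<gamma> t =
     Im (cnj (vector_derivative \<gamma> (at t)) *
         vector_derivative (\<lambda>u. vector_derivative \<gamma> (at u)) (at t)) / (speed \<gamma> t) ^ 3"

definition radius_of_curvature :: "(real \<Rightarrow> complex) \<Rightarrow> real \<Rightarrow> real" where
  "radius_of_curvature \<gamma> t = 1 / \<bar>curvature \<gamma> t\<bar>"

text \<open>Coordinates of the logarithmic curvature graph:
  (log rho, log (rho |ds/d rho|)), with |ds/d rho| = |ds/dt| / |d rho/dt|.\<close>
definition lcg_x :: "(real \<Rightarrow> complex) \<Rightarrow> real \<Rightarrow> real" where
  "lcg_x \<gamma> t = ln (radius_of_curvature \<gamma> t)"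

definition lcg_y :: "(real \<Rightarrow> complex) \<Rightarrow> real \<Rightarrow> real" where
  "lcg_y \<gamma> t = ln (radius_of_curvature \<gamma> t * speed \<gamma> t
                      / \<bar>deriv (radius_of_curvature \<gamma>) t\<bar>)"

definition involute :: "real \<Rightarrow> complex" where
  "involute \<theta> =
     (if 0 \<le> \<theta> then integral {0..\<theta>} (\<lambda>\<psi>. complex_of_real (\<psi> + 1) * cis \<psi>)
      else - integral {\<theta>..0} (\<lambda>\<psi>. complex_of_real (\<psi> + 1) * cis \<psi>))"

definition isoptic_delta :: real where
  "isoptic_delta = 2 * pi / 3"

definition isoptic :: "real \<Rightarrow> complex" where
  "isoptic \<theta> =
     (let V = involute (\<theta> + isoptic_delta) - involute \<theta> in
      involute \<theta> + complex_of_real ((1 / sin isoptic_delta) *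
         (Re V * sin (\<theta> + isoptic_delta) - Im V * cos (\<theta> + isoptic_delta))) * cis \<theta>)"

end

theory Submission
  imports Defs "HOL-Real_Asymp.Real_Asymp"
begin

(* Closed-form integration gives I(\<theta>) = ((\<surd>3 - i)(\<theta> + 1) + \<beta>) e^(i\<theta>) - (1 - i) with
   \<beta> = \<delta> / sin \<delta>, so the velocity of the isoptic is (u0 + \<theta> u1) e^(i\<theta>) for constants u0, u1.
   For such a curve the squared speed Q is a quadratic polynomial and the curvature is
   (Q + k) / Q^(3/2) with k = Im (conj u0 u1) = 4 - \<beta>, so both coordinates X, Y of the
   logarithmic curvature graph are explicit sums of logarithms. As \<theta> \<rightarrow> \<infinity>, X tends to \<infinity>
   while Y - 2 X + ln 2 is positive and asymptotic to (4 - \<beta>)^2 / (32 \<theta>^2); hence no relation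
   a X + b Y = c with (a, b) \<noteq> 0 can hold, and the secant slopes of the graph tend to 2. *)

lemma has_vector_derivative_affine_times_cis:
  "((\<lambda>t. (a + of_real t * b) * cis t) has_vector_derivative
     (b + \<i> * a + of_real t * (\<i> * b)) * cis t) (at t within S)"
proof -
  have "((\<lambda>t. a + of_real t * b) has_vector_derivative b) (at t within S)"
    by (auto intro!: derivative_eq_intros)
  moreover have "(cis has_vector_derivative \<i> * cis t) (at t within S)"
    unfolding has_vector_derivative_def by (auto intro!: derivative_eq_intros)
  ultimately have "((\<lambda>t. (a + of_real t * b) * cis t) has_vector_derivative
      (a + of_real t * b) * (\<i> * cis t) + b * cis t) (at t within S)"
    by (rule has_vector_derivative_mult)
  then show ?thesis
    by (simp add: algebra_simps)
qed

lemma
  assumes velocity: "\<And>t. (\<gamma> has_vector_derivative (u0 + of_real t * u1) * cis t) (at t)"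
  shows speed_affine_cis_velocity: "speed \<gamma> t = cmod (u0 + of_real t * u1)"
    and curvature_affine_cis_velocity:
      "curvature \<gamma> t =
         (cmod (u0 + of_real t * u1) ^ 2 + Im (cnj u0 * u1)) / cmod (u0 + of_real t * u1) ^ 3"
proof -
  define w where "w = u0 + of_real t * u1"
  have velocity_eq: "vector_derivative \<gamma> (at u) = (u0 + of_real u * u1) * cis u" for u
    using vector_derivative_at[OF velocity] .
  have acceleration_eq: "vector_derivative (\<lambda>u. vector_derivative \<gamma> (at u)) (at t) = (u1 + \<i> * w) * cis t"
    unfolding velocity_eq w_def
    by (rule vector_derivative_at[OF has_vector_derivative_affine_times_cis, THEN trans])
       (simp add: algebra_simps)
  show "speed \<gamma> t = cmod (u0 + of_real t * u1)"
    by (simp add: speed_def velocity_eq norm_mult)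
  have "cnj (w * cis t) * ((u1 + \<i> * w) * cis t) = cnj w * (u1 + \<i> * w) * (cnj (cis t) * cis t)"
    by (simp add: mult_ac)
  also have "\<dots> = cnj w * u1 + \<i> * (cnj w * w)"
    by (simp add: cis_cnj cis_mult algebra_simps)
  finally have "Im (cnj (w * cis t) * ((u1 + \<i> * w) * cis t)) = Im (cnj w * u1) + Re (cnj w * w)"
    by simp
  moreover have "Im (cnj w * u1) = Im (cnj u0 * u1)"
    by (simp add: w_def algebra_simps)
  moreover have "Re (cnj w * w) = cmod w ^ 2"
    by (subst cmod_power2) (simp add: power2_eq_square)
  ultimately have "Im (cnj (w * cis t) * ((u1 + \<i> * w) * cis t)) = cmod w ^ 2 + Im (cnj u0 * u1)"
    by simp
  then show "curvature \<gamma> t = (cmod w ^ 2 + Im (cnj u0 * u1)) / cmod w ^ 3"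
    unfolding curvature_def acceleration_eq unfolding speed_def velocity_eq w_def[symmetric] by (simp add: norm_mult)
qed

lemma radius_of_curvature_eq_sqrt_cube_divide:
  assumes curvature: "\<And>t. curvature \<gamma> t = (Q t + k) / sqrt (Q t) ^ 3"
    and Q_nonneg: "\<And>t. 0 \<le> Q t" and "0 < k"
  shows "radius_of_curvature \<gamma> = (\<lambda>t. sqrt (Q t) ^ 3 / (Q t + k))"
proof
  fix t
  have "0 < Q t + k"
    using Q_nonneg[of t] \<open>0 < k\<close> by simp
  with Q_nonneg[of t] show "radius_of_curvature \<gamma> t = sqrt (Q t) ^ 3 / (Q t + k)"
    by (simp add: radius_of_curvature_def curvature)
qed

lemma has_real_derivative_sqrt_cube_divide:
  assumes Q': "(Q has_real_derivative Q') (at t)" and "0 < Q t" and "0 < Q t + k"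
  shows "((\<lambda>t. sqrt (Q t) ^ 3 / (Q t + k)) has_real_derivative
           Q' * sqrt (Q t) * (Q t + 3 * k) / (2 * (Q t + k) ^ 2)) (at t)"
proof -
  define s where "s = sqrt (Q t)"
  have s: "0 < s" "Q t = s ^ 2"
    using \<open>0 < Q t\<close> by (simp_all add: s_def)
  have "((\<lambda>t. sqrt (Q t) ^ 3 / (Q t + k)) has_real_derivative
          (3 * (Q' / (2 * s)) * s ^ 2 * (Q t + k) - s ^ 3 * Q') / (Q t + k) ^ 2) (at t)"
    using \<open>0 < Q t\<close> \<open>0 < Q t + k\<close>
    by (auto intro!: derivative_eq_intros Q' simp: s_def power2_eq_square divide_simps)
  also have "(3 * (Q' / (2 * s)) * s ^ 2 * (Q t + k) - s ^ 3 * Q') / (Q t + k) ^ 2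
      = Q' * s * (Q t + 3 * k) / (2 * (Q t + k) ^ 2)"
    using s by (simp add: field_simps power2_eq_square power3_eq_cube)
  finally show ?thesis
    unfolding s_def .
qed

lemma
  assumes speed: "\<And>t. speed \<gamma> t = sqrt (Q t)"
    and curvature: "\<And>t. curvature \<gamma> t = (Q t + k) / sqrt (Q t) ^ 3"
    and Q_nonneg: "\<And>t. 0 \<le> Q t" and "0 < k"
    and Q': "(Q has_real_derivative Q') (at t)" and "0 < Q t" and "Q' \<noteq> 0"
  shows lcg_x_of_speed_sq: "lcg_x \<gamma> t = 3 / 2 * ln (Q t) - ln (Q t + k)"
    and lcg_y_of_speed_sq: "lcg_y \<gamma> t =
      ln 2 + 3 / 2 * ln (Q t) + ln (Q t + k) - ln \<bar>Q'\<bar> - ln (Q t + 3 * k)"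
proof -
  define s where "s = sqrt (Q t)"
  have "0 < s"
    using \<open>0 < Q t\<close> by (simp add: s_def)
  have pos: "0 < Q t + k" "0 < Q t + 3 * k"
    using \<open>0 < Q t\<close> \<open>0 < k\<close> by simp_all
  note radius = radius_of_curvature_eq_sqrt_cube_divide[OF curvature Q_nonneg \<open>0 < k\<close>]
  have ln_s3: "ln (s ^ 3) = 3 / 2 * ln (Q t)"
    using \<open>0 < Q t\<close> by (simp add: s_def ln_realpow ln_sqrt)
  show "lcg_x \<gamma> t = 3 / 2 * ln (Q t) - ln (Q t + k)"
    using \<open>0 < s\<close> pos by (simp add: lcg_x_def radius ln_div ln_s3 flip: s_def)
  have "deriv (radius_of_curvature \<gamma>) t = Q' * s * (Q t + 3 * k) / (2 * (Q t + k) ^ 2)"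
    unfolding radius s_def
    by (rule DERIV_imp_deriv[OF has_real_derivative_sqrt_cube_divide[OF Q' \<open>0 < Q t\<close> pos(1)]])
  then have "radius_of_curvature \<gamma> t * speed \<gamma> t / \<bar>deriv (radius_of_curvature \<gamma>) t\<bar>
      = s ^ 3 / (Q t + k) * s / (\<bar>Q'\<bar> * s * (Q t + 3 * k) / (2 * (Q t + k) ^ 2))"
    using \<open>0 < s\<close> pos by (simp add: radius speed abs_mult flip: s_def)
  also have "\<dots> = 2 * s ^ 3 * (Q t + k) / (\<bar>Q'\<bar> * (Q t + 3 * k))"
  proof -
    have "s ^ 3 / A * s / (q * s * B / (2 * A ^ 2)) = 2 * s ^ 3 * A / (q * B)"
      if "0 < A" "0 < B" "0 < q" for A B q :: real
      using that \<open>0 < s\<close> by (simp add: field_simps power2_eq_square)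
    with pos \<open>Q' \<noteq> 0\<close> show ?thesis
      by simp
  qed
  finally show "lcg_y \<gamma> t = ln 2 + 3 / 2 * ln (Q t) + ln (Q t + k) - ln \<bar>Q'\<bar> - ln (Q t + 3 * k)"
    using \<open>0 < s\<close> pos \<open>Q' \<noteq> 0\<close> by (simp add: lcg_y_def ln_div ln_mult ln_s3)
qed

lemma involute_eq: "involute \<theta> = (1 - \<i> + of_real \<theta> * (- \<i>)) * cis \<theta> - (1 - \<i>)"
proof -
  define F where "F = (\<lambda>\<psi>. (1 - \<i> + of_real \<psi> * (- \<i>)) * cis \<psi>)"
  have F': "(F has_vector_derivative complex_of_real (\<psi> + 1) * cis \<psi>) (at \<psi> within S)" for \<psi> S
    unfolding F_def
    by (rule has_vector_derivative_eq_rhs[OF has_vector_derivative_affine_times_cis])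
       (simp add: algebra_simps)
  have "integral {a..b} (\<lambda>\<psi>. complex_of_real (\<psi> + 1) * cis \<psi>) = F b - F a" if "a \<le> b" for a b
    using that F' by (intro integral_unique fundamental_theorem_of_calculus) auto
  then have "involute \<theta> = F \<theta> - F 0"
    by (cases "0 \<le> \<theta>") (simp_all add: involute_def)
  then show ?thesis
    by (simp add: F_def)
qed

(* \<beta> = \<delta> / sin \<delta> *)
definition isoptic_beta :: real where
  "isoptic_beta = 4 * pi / (3 * sqrt 3)"

lemma isoptic_beta_pos: "0 < isoptic_beta"
  by (simp add: isoptic_beta_def)

lemma isoptic_beta_less_4: "isoptic_beta < 4"
proof -
  have "(4::real) < 3 * sqrt 3"
    by (rule power2_less_imp_less) (simp_all add: power_mult_distrib)
  then have "4 * pi < 4 * (3 * sqrt 3)"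
    using pi_less_4 by (smt (verit) pi_gt_zero mult_strict_left_mono)
  then show ?thesis
    by (simp add: isoptic_beta_def divide_less_eq)
qed

lemma isoptic_eq_involute_plus_tangent:
  "isoptic \<theta> = involute \<theta> + of_real (sqrt 3 * (\<theta> + 1) + isoptic_beta - 1) * cis \<theta>"
proof -
  define d where "d = isoptic_delta"
  define V where "V = involute (\<theta> + d) - involute \<theta>"
  have sin_d: "sin d = sqrt 3 / 2" and cos_d: "cos d = - 1 / 2"
    using sin_pi_minus[of "pi / 3"] cos_pi_minus[of "pi / 3"]
    by (simp_all add: d_def isoptic_delta_def sin_60 cos_60)
  have "V * cis (- (\<theta> + d)) =
      (1 - \<i> + of_real (\<theta> + d) * (- \<i>)) * (cis (\<theta> + d) * cis (- (\<theta> + d)))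
      - (1 - \<i> + of_real \<theta> * (- \<i>)) * (cis \<theta> * cis (- (\<theta> + d)))"
    unfolding V_def involute_eq by algebra
  also have "\<dots> = (1 - \<i> - \<i> * of_real (\<theta> + d)) - (1 - \<i> - \<i> * of_real \<theta>) * cis (- d)"
    by (simp add: cis_mult)
  finally have Im_V: "Im (V * cis (- (\<theta> + d))) =
      Im ((1 - \<i> - \<i> * of_real (\<theta> + d)) - (1 - \<i> - \<i> * of_real \<theta>) * cis (- d))"
    by (rule arg_cong)
  have "(1 / sin d) * (Re V * sin (\<theta> + d) - Im V * cos (\<theta> + d)) = - Im (V * cis (- (\<theta> + d))) / sin d"
    using sin_minus[of "\<theta> + d"] cos_minus[of "\<theta> + d"] by simp
  also have "\<dots> = ((1 + \<theta> + d) - (1 + \<theta>) * cos d - sin d) / sin d"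
    unfolding Im_V by (simp add: algebra_simps)
  also have "\<dots> = sqrt 3 * (\<theta> + 1) + isoptic_beta - 1"
    unfolding sin_d cos_d by (simp add: d_def isoptic_delta_def isoptic_beta_def field_simps)
  finally have coefficient:
    "(1 / sin d) * (Re V * sin (\<theta> + d) - Im V * cos (\<theta> + d)) = sqrt 3 * (\<theta> + 1) + isoptic_beta - 1" .
  show ?thesis
    unfolding isoptic_def Let_def d_def[symmetric] V_def[symmetric] coefficient ..
qed

lemma isoptic_eq:
  "isoptic \<theta> = (sqrt 3 + isoptic_beta - \<i> + of_real \<theta> * (sqrt 3 - \<i>)) * cis \<theta> - (1 - \<i>)"
  by (simp add: isoptic_eq_involute_plus_tangent involute_eq algebra_simps)

lemma has_vector_derivative_isoptic:
  "(isoptic has_vector_derivative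
     (1 + sqrt 3 + \<i> * (sqrt 3 + isoptic_beta - 1) + of_real t * (1 + \<i> * sqrt 3)) * cis t) (at t)"
proof -
  have "((\<lambda>\<theta>. (sqrt 3 + isoptic_beta - \<i> + of_real \<theta> * (sqrt 3 - \<i>)) * cis \<theta> - (1 - \<i>))
      has_vector_derivative
        (sqrt 3 - \<i> + \<i> * (sqrt 3 + isoptic_beta - \<i>) + of_real t * (\<i> * (sqrt 3 - \<i>))) * cis t - 0) (at t)"
    by (intro has_vector_derivative_diff has_vector_derivative_affine_times_cis has_vector_derivative_const)
  then show ?thesis
    by (simp add: isoptic_eq [abs_def] algebra_simps)
qed

(* Closed forms for the isoptic, with isoptic_beta abstracted to a parameter b so that
   real_asymp treats it as an opaque constant. *)
definition isoptic_speed_sq :: "real \<Rightarrow> real \<Rightarrow> real" where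
  "isoptic_speed_sq b t = 4 * (t + 1)\<^sup>2 + 2 * sqrt 3 * b * (t + 1) + 3 + (b - 1)\<^sup>2"

definition isoptic_lcg_x :: "real \<Rightarrow> real \<Rightarrow> real" where
  "isoptic_lcg_x b t = 3 / 2 * ln (isoptic_speed_sq b t) - ln (isoptic_speed_sq b t + (4 - b))"

definition isoptic_lcg_y :: "real \<Rightarrow> real \<Rightarrow> real" where
  "isoptic_lcg_y b t = ln 2 + 3 / 2 * ln (isoptic_speed_sq b t) + ln (isoptic_speed_sq b t + (4 - b))
     - ln (8 * (t + 1) + 2 * sqrt 3 * b) - ln (isoptic_speed_sq b t + 3 * (4 - b))"

lemma norm_isoptic_velocity_sq:
  "cmod (1 + sqrt 3 + \<i> * (sqrt 3 + isoptic_beta - 1) + of_real t * (1 + \<i> * sqrt 3)) ^ 2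
     = isoptic_speed_sq isoptic_beta t"
  by (simp add: cmod_power2) (simp add: isoptic_speed_sq_def power2_eq_square algebra_simps)

lemma
  assumes "-1 < t"
  shows lcg_x_isoptic: "lcg_x isoptic t = isoptic_lcg_x isoptic_beta t"
    and lcg_y_isoptic: "lcg_y isoptic t = isoptic_lcg_y isoptic_beta t"
proof -
  define Q where "Q = isoptic_speed_sq isoptic_beta"
  define Q' where "Q' = 8 * (t + 1) + 2 * sqrt 3 * isoptic_beta"
  note velocity = has_vector_derivative_isoptic
  have speed: "speed isoptic t = sqrt (Q t)" for t
    by (simp add: speed_affine_cis_velocity[OF velocity] Q_def flip: norm_isoptic_velocity_sq)
  have curvature: "curvature isoptic t = (Q t + (4 - isoptic_beta)) / sqrt (Q t) ^ 3" for t
    by (simp add: curvature_affine_cis_velocity[OF velocity] Q_def algebra_simps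
        flip: norm_isoptic_velocity_sq)
  have Q_nonneg: "0 \<le> Q t" for t
    by (simp add: Q_def flip: norm_isoptic_velocity_sq)
  have "(Q has_real_derivative Q') (at t)"
    unfolding Q_def Q'_def isoptic_speed_sq_def [abs_def]
    by (auto intro!: derivative_eq_intros simp: algebra_simps)
  moreover have "0 < Q t" "0 < Q'"
  proof -
    have "0 < 2 * sqrt 3 * isoptic_beta" "0 \<le> 2 * sqrt 3 * isoptic_beta * (t + 1)"
      using assms isoptic_beta_pos by simp_all
    then show "0 < Q t"
      unfolding Q_def isoptic_speed_sq_def
      using zero_le_power2[of "t + 1"] zero_le_power2[of "isoptic_beta - 1"] by linarith
    show "0 < Q'"
      unfolding Q'_def using assms \<open>0 < 2 * sqrt 3 * isoptic_beta\<close> by (smt (verit))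
  qed
  moreover have "0 < 4 - isoptic_beta"
    using isoptic_beta_less_4 by simp
  ultimately show "lcg_x isoptic t = isoptic_lcg_x isoptic_beta t"
    and "lcg_y isoptic t = isoptic_lcg_y isoptic_beta t"
    using lcg_x_of_speed_sq[OF speed curvature Q_nonneg] lcg_y_of_speed_sq[OF speed curvature Q_nonneg]
    by (simp_all add: isoptic_lcg_x_def isoptic_lcg_y_def Q_def Q'_def)
qed

lemma isoptic_lcg_x_at_top: "filterlim (isoptic_lcg_x b) at_top at_top"
  unfolding isoptic_lcg_x_def isoptic_speed_sq_def by real_asymp

lemma ln_4_ln_8: "ln (4 :: real) = 2 * ln 2" "ln (8 :: real) = 3 * ln 2"
  using ln_realpow[of 2 2] ln_realpow[of 2 3] by simp_all

lemma tendsto_isoptic_lcg_y_minus_twice_x: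
  "((\<lambda>t. isoptic_lcg_y b t - 2 * isoptic_lcg_x b t) \<longlongrightarrow> - ln 2) at_top"
  unfolding isoptic_lcg_x_def isoptic_lcg_y_def isoptic_speed_sq_def by (real_asymp simp: ln_4_ln_8)

lemma eventually_isoptic_lcg_y_minus_twice_x_gt:
  assumes "b < 4"
  shows "eventually (\<lambda>t. - ln 2 < isoptic_lcg_y b t - 2 * isoptic_lcg_x b t) at_top"
proof -
  have "((\<lambda>t. (t + 1)\<^sup>2 * (isoptic_lcg_y b t - 2 * isoptic_lcg_x b t + ln 2)) \<longlongrightarrow> (4 - b)\<^sup>2 / 32) at_top"
    unfolding isoptic_lcg_x_def isoptic_lcg_y_def isoptic_speed_sq_def using assms
    by (real_asymp simp: ln_4_ln_8 field_simps) (simp add: sqrt_def[symmetric] power2_eq_square field_simps)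
  moreover have "0 < (4 - b)\<^sup>2 / 32"
    using assms by simp
  ultimately have "eventually (\<lambda>t. 0 < (t + 1)\<^sup>2 * (isoptic_lcg_y b t - 2 * isoptic_lcg_x b t + ln 2)) at_top"
    by (rule order_tendstoD)
  then show ?thesis
    by eventually_elim (simp add: zero_less_mult_iff)
qed

lemma tendsto_isoptic_lcg_slope:
  "((\<lambda>t. (isoptic_lcg_y b (t + pi) - isoptic_lcg_y b t) / (isoptic_lcg_x b (t + pi) - isoptic_lcg_x b t))
     \<longlongrightarrow> 2) at_top"
  unfolding isoptic_lcg_x_def isoptic_lcg_y_def isoptic_speed_sq_def
  using pi_gt_zero by (real_asymp simp: field_simps)

lemma eventually_linear_relation_imp_trivial:
  fixes X Y :: "'a \<Rightarrow> real"
  assumes "F \<noteq> bot" and X: "filterlim X at_top F"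
    and L: "((\<lambda>t. Y t - m * X t) \<longlongrightarrow> d) F" and L_ne: "eventually (\<lambda>t. Y t - m * X t \<noteq> d) F"
    and relation: "eventually (\<lambda>t. a * X t + b * Y t = c) F"
  shows "a = 0 \<and> b = 0"
proof -
  define L where "L t = Y t - m * X t" for t
  have rearranged: "eventually (\<lambda>t. (a + m * b) * X t = c - b * L t) F"
    using relation by eventually_elim (simp add: L_def algebra_simps)
  have "a + m * b = 0"
  proof (rule ccontr)
    assume "a + m * b \<noteq> 0"
    have "((\<lambda>t. (c - b * L t) / (a + m * b)) \<longlongrightarrow> (c - b * d) / (a + m * b)) F"
      unfolding L_def by (intro tendsto_intros L \<open>a + m * b \<noteq> 0\<close>)
    moreover have "eventually (\<lambda>t. (c - b * L t) / (a + m * b) = X t) F"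
      using rearranged by eventually_elim (use \<open>a + m * b \<noteq> 0\<close> in \<open>simp add: field_simps\<close>)
    ultimately have "(X \<longlongrightarrow> (c - b * d) / (a + m * b)) F"
      by (rule Lim_transform_eventually)
    then show False
      using not_tendsto_and_filterlim_at_infinity[OF \<open>F \<noteq> bot\<close>] filterlim_at_top_imp_at_infinity[OF X]
      by blast
  qed
  then have a: "a = - m * b"
    by simp
  have "eventually (\<lambda>t. b * L t = c) F"
    using relation by eventually_elim (simp add: L_def a algebra_simps)
  then have "((\<lambda>t. b * L t) \<longlongrightarrow> c) F"
    by (rule tendsto_eventually)
  moreover have "((\<lambda>t. b * L t) \<longlongrightarrow> b * d) F"
    unfolding L_def by (intro tendsto_intros L)
  ultimately have "c = b * d"
    using tendsto_unique[OF \<open>F \<noteq> bot\<close>] by blast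
  obtain t where "b * L t = c" "L t \<noteq> d"
    using eventually_happens'[OF \<open>F \<noteq> bot\<close> eventually_conj[OF \<open>eventually (\<lambda>t. b * L t = c) F\<close> L_ne]]
    by (auto simp: L_def)
  with \<open>c = b * d\<close> have "b = 0"
    by simp
  with a show ?thesis
    by simp
qed

lemma eventually_linear_lcg_isoptic_imp_trivial:
  assumes "eventually (\<lambda>t. a * lcg_x isoptic t + b * lcg_y isoptic t = c) at_top"
  shows "a = 0 \<and> b = 0"
proof (rule eventually_linear_relation_imp_trivial[OF trivial_limit_at_top_linorder
    isoptic_lcg_x_at_top tendsto_isoptic_lcg_y_minus_twice_x])
  show "eventually (\<lambda>t. isoptic_lcg_y isoptic_beta t - 2 * isoptic_lcg_x isoptic_beta t \<noteq> - ln 2) at_top"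
    using eventually_isoptic_lcg_y_minus_twice_x_gt[OF isoptic_beta_less_4] by eventually_elim simp
  show "eventually (\<lambda>t. a * isoptic_lcg_x isoptic_beta t + b * isoptic_lcg_y isoptic_beta t = c) at_top"
    using assms eventually_gt_at_top[of "-1"] by eventually_elim (simp add: lcg_x_isoptic lcg_y_isoptic)
qed

lemma tendsto_lcg_isoptic_slope:
  "((\<lambda>t. (lcg_y isoptic (t + pi) - lcg_y isoptic t) / (lcg_x isoptic (t + pi) - lcg_x isoptic t))
     \<longlongrightarrow> 2) at_top"
proof (rule Lim_transform_eventually[OF tendsto_isoptic_lcg_slope])
  show "eventually (\<lambda>t.
      (isoptic_lcg_y isoptic_beta (t + pi) - isoptic_lcg_y isoptic_beta t) /
      (isoptic_lcg_x isoptic_beta (t + pi) - isoptic_lcg_x isoptic_beta t) =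
      (lcg_y isoptic (t + pi) - lcg_y isoptic t) / (lcg_x isoptic (t + pi) - lcg_x isoptic t)) at_top"
    using eventually_gt_at_top[of "-1"]
  proof eventually_elim
    case (elim t)
    moreover from elim have "-1 < t + pi"
      using pi_gt_zero by linarith
    ultimately show ?case
      by (simp add: lcg_x_isoptic lcg_y_isoptic)
  qed
qed

theorem mainTheorem2:
  shows "\<not> (\<exists>a b c :: real. (a \<noteq> 0 \<or> b \<noteq> 0) \<and>
            (\<forall>\<theta> > -1. a * lcg_x isoptic \<theta> + b * lcg_y isoptic \<theta> = c))
         \<and> ((\<lambda>\<theta>. (lcg_y isoptic (\<theta> + pi) - lcg_y isoptic \<theta>) /
               (lcg_x isoptic (\<theta> + pi) - lcg_x isoptic \<theta>)) \<longlongrightarrow> 2) at_top"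
proof (rule conjI[OF notI tendsto_lcg_isoptic_slope])
  assume "\<exists>a b c :: real. (a \<noteq> 0 \<or> b \<noteq> 0) \<and>
            (\<forall>\<theta> > -1. a * lcg_x isoptic \<theta> + b * lcg_y isoptic \<theta> = c)"
  then obtain a b c :: real where "a \<noteq> 0 \<or> b \<noteq> 0"
    and on_line: "\<forall>\<theta> > -1. a * lcg_x isoptic \<theta> + b * lcg_y isoptic \<theta> = c"
    by blast
  have "eventually (\<lambda>t. a * lcg_x isoptic t + b * lcg_y isoptic t = c) at_top"
    using eventually_gt_at_top[of "-1"] by eventually_elim (use on_line in auto)
  with \<open>a \<noteq> 0 \<or> b \<noteq> 0\<close> show False
    using eventually_linear_lcg_isoptic_imp_trivial by blast
qed

end
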